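(* Let $T\ge1$ and let $d_1,\dots,d_T\in\{0,1,2,\dots\}$ satisfy $t+d_t\le T$ for all $t\in[T]$. For $t\in[T]$ let $m_t=\{\tau\in[t-1]:\tau+d_\tau\ge t\}$ and $\sigma_{\max}=\max_{t\in[T]}|m_t|$. For $S\subseteq[T]$ let $d_{\mathrm{tot}}(S)=\sum_{\tau\in S}d_\tau$ and $\bar S=[T]\setminus S$. Then $$\sigma_{\max}\le2\sqrt2\min_{S\subseteq[T]}\left(|S|+\sqrt{d_{\mathrm{tot}}(\bar S)}\right).$$
   Context: $[k]=\{1,\dots,k\}$, $[0]=\emptyset$. The set $m_t$ consists of the rounds before $t$ whose feedback (revealed at the end of round $\tau+d_\tau$) has not been received before round $t$. *)

theory Defs
  imports Complex_Main
begin

definition missing :: "(nat \<Rightarrow> nat) \<Rightarrow> nat \<Rightarrow> nat set" where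
  "missing d t = {\<tau> \<in> {1..t-1}. \<tau> + d \<tau> \<ge> t}"

definition sigma_max :: "nat \<Rightarrow> (nat \<Rightarrow> nat) \<Rightarrow> nat" where
  "sigma_max T d = Max ((\<lambda>t. card (missing d t)) ` {1..T})"

definition d_tot :: "(nat \<Rightarrow> nat) \<Rightarrow> nat set \<Rightarrow> nat" where
  "d_tot d S = (\<Sum>\<tau>\<in>S. d \<tau>)"

end

theory Submission
  imports Defs
begin

text \<open>The rounds \<open>\<tau> \<in> m\<^sub>t\<close> outside \<open>S\<close> have pairwise
  distinct gaps \<open>t - \<tau> \<ge> 1\<close>, and each gap is at most \<open>d\<^sub>\<tau>\<close>. If there are \<open>j\<close> of them, their
  delays therefore sum to at least \<open>1 + \<dots> + j = j(j+1)/2\<close>, so \<open>j \<le> sqrt (2 d\<^sub>t\<^sub>o\<^sub>t(S\<^sup>c))\<close> and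
  \<open>|m\<^sub>t| \<le> |S| + sqrt 2 sqrt (d\<^sub>t\<^sub>o\<^sub>t(S\<^sup>c))\<close>, which is stronger than the claim.\<close>

lemma card_mult_Suc_card_le_sum:
  fixes B :: "nat set"
  assumes "finite B" and "0 \<notin> B"
  shows "card B * (card B + 1) \<le> 2 * \<Sum>B"
  using assms
proof (induction "card B" arbitrary: B)
  case 0
  then show ?case by simp
next
  case (Suc n)
  then have "B \<noteq> {}" by auto
  define m where "m = Max B"
  have "m \<in> B" using Max_in[OF Suc.prems(1) \<open>B \<noteq> {}\<close>] by (simp add: m_def)
  have "B \<subseteq> {1..m}"
    using Suc.prems by (auto simp: m_def Suc_le_eq) (metis gr0I)
  then have "card B \<le> m" using card_mono[of "{1..m}" B] by simp
  have "card (B - {m}) = n" using Suc.hyps(2) \<open>m \<in> B\<close> by simp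
  then have "n * (n + 1) \<le> 2 * \<Sum>(B - {m})"
    using Suc.hyps(1)[of "B - {m}"] Suc.prems by simp
  moreover have "\<Sum>B = m + \<Sum>(B - {m})"
    using Suc.prems(1) \<open>m \<in> B\<close> by (simp add: sum.remove)
  ultimately show ?case using \<open>card B \<le> m\<close> Suc.hyps(2)[symmetric] by simp
qed

lemma card_mult_Suc_card_le_sum_delays:
  assumes "A \<subseteq> missing d t"
  shows "card A * (card A + 1) \<le> 2 * (\<Sum>\<tau>\<in>A. d \<tau>)"
proof -
  have "finite (missing d t)" by (simp add: missing_def)
  with assms have "finite A" by (rule finite_subset)
  have inj: "inj_on (\<lambda>\<tau>. t - \<tau>) A"
    using assms by (auto simp: inj_on_def missing_def)
  have "0 \<notin> (\<lambda>\<tau>. t - \<tau>) ` A"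
    using assms by (auto simp: missing_def)
  then have "card A * (card A + 1) \<le> 2 * \<Sum>((\<lambda>\<tau>. t - \<tau>) ` A)"
    using card_mult_Suc_card_le_sum[of "(\<lambda>\<tau>. t - \<tau>) ` A"] \<open>finite A\<close>
    by (simp add: card_image[OF inj])
  also have "\<dots> = 2 * (\<Sum>\<tau>\<in>A. t - \<tau>)"
    by (simp add: sum.reindex[OF inj])
  also have "\<dots> \<le> 2 * (\<Sum>\<tau>\<in>A. d \<tau>)"
    using assms by (auto intro!: sum_mono simp: missing_def)
  finally show ?thesis .
qed

lemma card_missing_le:
  assumes "t \<in> {1..T}" and "finite S"
  shows "real (card (missing d t)) \<le> real (card S) + sqrt 2 * sqrt (real (d_tot d ({1..T} - S)))"
proof -
  define A where "A = missing d t - S"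
  have "missing d t \<subseteq> {1..T}" using assms(1) by (auto simp: missing_def)
  then have "finite A" by (auto simp: A_def finite_subset)
  have "card (missing d t) \<le> card (S \<union> A)"
    using \<open>finite A\<close> assms(2) by (intro card_mono) (auto simp: A_def)
  also have "\<dots> \<le> card S + card A" by (rule card_Un_le)
  finally have card_le: "card (missing d t) \<le> card S + card A" .
  have "card A * card A \<le> card A * (card A + 1)" by simp
  also have "\<dots> \<le> 2 * (\<Sum>\<tau>\<in>A. d \<tau>)"
    by (rule card_mult_Suc_card_le_sum_delays[of _ d t]) (simp add: A_def)
  also have "\<dots> \<le> 2 * d_tot d ({1..T} - S)"
    unfolding d_tot_def using \<open>missing d t \<subseteq> {1..T}\<close>
    by (intro mult_left_mono sum_mono2) (auto simp: A_def)
  finally have "real (card A) ^ 2 \<le> 2 * real (d_tot d ({1..T} - S))"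
    by (simp add: power2_eq_square flip: of_nat_mult)
  then have "real (card A) \<le> sqrt 2 * sqrt (real (d_tot d ({1..T} - S)))"
    by (simp add: real_le_rsqrt flip: real_sqrt_mult)
  with card_le show ?thesis by simp
qed

theorem lemmaA7:
  fixes T :: nat and d :: "nat \<Rightarrow> nat"
  assumes "T \<ge> 1"
    and "\<And>t. t \<in> {1..T} \<Longrightarrow> t + d t \<le> T"
  shows "real (sigma_max T d) \<le>
    2 * sqrt 2 * (MIN S\<in>Pow {1..T}. real (card S) + sqrt (real (d_tot d ({1..T} - S))))"
proof -
  define f where "f S = real (card S) + sqrt (real (d_tot d ({1..T} - S)))" for S
  obtain t where t: "t \<in> {1..T}" "sigma_max T d = card (missing d t)"
    using Max_in[of "(\<lambda>t. card (missing d t)) ` {1..T}"] assms(1)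
    unfolding sigma_max_def by fastforce
  have "(MIN S\<in>Pow {1..T}. f S) \<in> f ` Pow {1..T}" by (rule Min_in) auto
  then obtain S where S: "S \<subseteq> {1..T}" "(MIN S\<in>Pow {1..T}. f S) = f S" by auto
  have "real (sigma_max T d) \<le> real (card S) + sqrt 2 * sqrt (real (d_tot d ({1..T} - S)))"
    using card_missing_le[OF t(1), of S d] S(1) t(2) finite_subset by auto
  also have "\<dots> \<le> 2 * sqrt 2 * f S"
  proof -
    have "1 \<le> 2 * sqrt (2::real)" using real_sqrt_ge_one[of 2] by linarith
    then show ?thesis
      unfolding f_def distrib_left by (intro add_mono mult_right_mono) (auto simp: mult_le_cancel_right1)
  qed
  finally show ?thesis using S(2) by (simp add: f_def)
qed

end
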